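(* Consider $m$-th B-spline boosted quantum phase estimation with $l$ ancilla qubits, as described in the context, applied to an eigenstate of $U$ with phase parameter $E$. For a target failure probability $\delta\in(0,1)$ and a target (normalised) confidence-interval width $\epsilon\in(0,1)$, take the B-spline order $m = O(\log \frac{1}{\delta})$. Then the probability of measuring an outcome outside a normalised confidence interval of width $\epsilon$ around the true phase is at most $\delta$ provided the number of ancilla qubits is $l = O\left(\log \frac{1}{\epsilon} + \log\log \frac{1}{\delta}\right)$.
   Context: Quantum phase estimation (QPE): let $U$ be a unitary and $\ket{\psi}$ an eigenstate of $U$. With $l$ ancilla qubits whose basis states are labelled by integers $x\in\{-2^{l-1}+1,\dots,2^{l-1}\}$, one prepares a "window state" $\frac{1}{\tilde{\mathcal N}}\sum_x w(x)\ket{x}$ on the ancillas, applies $U^x$ to $\ket{\psi}$ controlled on the ancilla value $x$ (producing a phase $e^{iEx}$, where $E$ is the eigenphase in units of the ancilla grid), then applies the inverse quantum Fourier transform to the ancillas and measures them, obtaining an integer $k$ as an estimate of $E$. For the $m$-th B-spline window (the $m$-fold self-convolution of the rectangular function, a piecewise polynomial of degree $m-1$ with $m$ pieces, suitably rescaled to the ancilla grid), the resulting post-QPE ancilla state is $\frac{1}{\mathcal N}\sum_{k=-2^{l-1}+1}^{2^{l-1}} \left(\frac{\sin\frac{(k-E)\pi}{m}}{\frac{(k-E)\pi}{m}}\right)^m\ket{k}\ket{\psi}$, with $\mathcal N$ the normalising constant. The tail probability $\delta$ is the probability of measuring $k$ with $|k-E|>m$, i.e. outside the confidence interval $E\pm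 m$; in normalised units (dividing by $2^l$) this confidence interval has width $\epsilon = 2m/2^l$. *)

theory Defs
  imports Complex_Main
begin

definition sinc :: "real \<Rightarrow> real" where
  "sinc x = (if x = 0 then 1 else sin x / x)"

definition qpe_grid :: "nat \<Rightarrow> int set" where
  "qpe_grid l = {- (2 ^ (l - 1)) + 1 .. 2 ^ (l - 1)}"

text \<open>Unnormalised amplitude of outcome k after m-th B-spline boosted QPE.\<close>
definition bspline_amp :: "nat \<Rightarrow> real \<Rightarrow> int \<Rightarrow> real" where
  "bspline_amp m E k = (sinc ((real_of_int k - E) * pi / real m)) ^ m"

definition bspline_prob :: "nat \<Rightarrow> nat \<Rightarrow> real \<Rightarrow> int \<Rightarrow> real" where
  "bspline_prob l m E k =
     (bspline_amp m E k)\<^sup>2 / (\<Sum>j\<in>qpe_grid l. (bspline_amp m E j)\<^sup>2)"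

definition bspline_fail_prob :: "nat \<Rightarrow> nat \<Rightarrow> real \<Rightarrow> real \<Rightarrow> real" where
  "bspline_fail_prob l m E eps =
     (\<Sum>k\<in>{k\<in>qpe_grid l. \<bar>real_of_int k - E\<bar> / 2 ^ l > eps / 2}. bspline_prob l m E k)"

end

theory Submission
  imports Defs "HOL-Analysis.Complex_Transcendental"
begin

text \<open>The grid point nearest to E
  has a sinc argument in [-1, 1], where sinc \<ge> 1/2, so the normalising sum is at least 4^(-m).
  An outcome with |k - E| > m has weight at most m^2 / (pi^(2m) (k - E)^2), and comparing
  1/d^2 with 1/(d - 1) - 1/d telescopes the tails to at most 4 m / pi^(2m). Hence the
  probability of landing farther than m from E is at most 4 m (4/pi^2)^m \<le> 16 exp(-m/4),
  which is at most \<delta> once m \<ge> 16 (1 + ln(1/\<delta>)). The confidence interval contains E \<plusminus> m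
  as soon as 2^l \<ge> 2m/\<epsilon>, i.e. for l of order log(1/\<epsilon>) + log log(1/\<delta>).\<close>

lemma abs_sinc_minus_one_le: "\<bar>sinc x - 1\<bar> \<le> x\<^sup>2 / 6"
proof (cases "x = 0")
  case False
  have "\<bar>sin x - (\<Sum>n<3. sin_coeff n * x ^ n)\<bar> \<le> inverse (fact 3) * \<bar>x\<bar> ^ 3"
    by (rule Maclaurin_sin_bound)
  moreover have "(\<Sum>n<3. sin_coeff n * x ^ n) = x"
    by (simp add: numeral_3_eq_3 sin_coeff_def)
  moreover have "inverse (fact 3) * \<bar>x\<bar> ^ 3 = \<bar>x\<bar> * (x\<^sup>2 / 6)"
    by (simp add: fact_numeral power3_eq_cube power2_eq_square)
  ultimately have "\<bar>sin x - x\<bar> \<le> \<bar>x\<bar> * (x\<^sup>2 / 6)"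
    by simp
  moreover have "sinc x - 1 = (sin x - x) / x"
    using False by (simp add: sinc_def field_simps)
  ultimately show ?thesis
    using False by (simp add: abs_divide divide_le_eq mult.commute)
qed (simp add: sinc_def)

lemma abs_sinc_le_inverse_abs: "x \<noteq> 0 \<Longrightarrow> \<bar>sinc x\<bar> \<le> 1 / \<bar>x\<bar>"
  by (simp add: sinc_def abs_divide divide_right_mono)

lemma half_le_ln_2: "1 / 2 \<le> ln (2 :: real)"
  using exp_half_le2 by (subst ln_ge_iff) auto

lemma half_pow_le_exp: "(1 / 2 :: real) ^ m \<le> exp (- real m / 2)"
proof -
  have "exp (real m / 2) = exp (1 / 2) ^ m"
    by (simp flip: exp_of_nat_mult)
  also have "\<dots> \<le> 2 ^ m"
    using exp_half_le2 by (intro power_mono) auto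
  finally show ?thesis
    by (simp add: exp_minus power_one_over field_simps)
qed

lemma log2_le_two_ln:
  assumes "1 \<le> x"
  shows "log 2 x \<le> 2 * ln x"
proof -
  have "log 2 x = ln x / ln 2"
    by (simp add: log_def)
  also have "\<dots> \<le> ln x / (1 / 2)"
    using assms half_le_ln_2 by (intro divide_left_mono) auto
  finally show ?thesis by simp
qed

lemma sum_le_telescoping_majorant:
  fixes f h :: "int \<Rightarrow> real"
  assumes "finite S" and S: "\<forall>k\<in>S. a \<le> k"
    and f_nonneg: "\<And>k. a \<le> k \<Longrightarrow> 0 \<le> f k"
    and f_le: "\<And>k. a \<le> k \<Longrightarrow> f k \<le> h (k - 1) - h k"
    and h_nonneg: "\<And>k. a - 1 \<le> k \<Longrightarrow> 0 \<le> h k"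
  shows "(\<Sum>k\<in>S. f k) \<le> h (a - 1)"
proof -
  obtain b where b: "\<forall>k\<in>S. k \<le> b"
    using \<open>finite S\<close> Max_ge by blast
  define N where "N = nat (b - a + 1)"
  have S_sub: "S \<subseteq> (\<lambda>n. a + int n) ` {..<N}"
  proof
    fix k assume "k \<in> S"
    then have "a \<le> k" "k \<le> b"
      using S b by auto
    then have "k = a + int (nat (k - a))" "nat (k - a) < N"
      by (auto simp: N_def)
    then show "k \<in> (\<lambda>n. a + int n) ` {..<N}" by blast
  qed
  have "(\<Sum>k\<in>S. f k) \<le> (\<Sum>k\<in>(\<lambda>n. a + int n) ` {..<N}. f k)"
    using S_sub f_nonneg by (intro sum_mono2) auto
  also have "\<dots> = (\<Sum>n<N. f (a + int n))"
    by (subst sum.reindex) (auto simp: inj_on_def)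
  also have "\<dots> \<le> (\<Sum>n<N. h (a + int n - 1) - h (a + int (Suc n) - 1))"
    using f_le by (intro sum_mono) auto
  also have "\<dots> = h (a - 1) - h (a + int N - 1)"
    by (subst sum_lessThan_telescope') simp
  also have "\<dots> \<le> h (a - 1)"
    using h_nonneg[of "a + int N - 1"] by simp
  finally show ?thesis .
qed

lemma sum_inverse_square_right_tail_le:
  fixes S :: "int set" and E M :: real
  assumes "finite S" and "1 < M" and S: "\<forall>k\<in>S. M < real_of_int k - E"
  shows "(\<Sum>k\<in>S. 1 / (real_of_int k - E)\<^sup>2) \<le> 1 / (M - 1)"
proof -
  define a where "a = \<lfloor>E + M\<rfloor> + 1"
  have a: "E + M < real_of_int a" "real_of_int a \<le> E + M + 1"
    unfolding a_def by linarith+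
  have "(\<Sum>k\<in>S. 1 / (real_of_int k - E)\<^sup>2) \<le> 1 / (real_of_int (a - 1) - E)"
  proof (rule sum_le_telescoping_majorant)
    show "\<forall>k\<in>S. a \<le> k"
    proof
      fix k assume "k \<in> S"
      then have "E + M < real_of_int k" using S by auto
      then show "a \<le> k" unfolding a_def by linarith
    qed
    fix k
    assume "a \<le> k"
    then have d: "1 < real_of_int k - E" (is "1 < ?d")
      using a \<open>1 < M\<close> by linarith
    then have "1 / ?d\<^sup>2 \<le> 1 / ((?d - 1) * ?d)"
      by (intro divide_left_mono) (auto simp: power2_eq_square)
    also have "\<dots> = 1 / (?d - 1) - 1 / ?d"
      using d by (simp add: field_simps)
    finally show "1 / ?d\<^sup>2 \<le> 1 / (real_of_int (k - 1) - E) - 1 / ?d"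
      by (simp add: algebra_simps)
  next
    fix k
    assume "a - 1 \<le> k"
    then have "0 < real_of_int k - E"
      using a \<open>1 < M\<close> by linarith
    then show "0 \<le> 1 / (real_of_int k - E)" by simp
  qed (simp_all add: \<open>finite S\<close>)
  also have "\<dots> \<le> 1 / (M - 1)"
    using a \<open>1 < M\<close> by (intro divide_left_mono) auto
  finally show ?thesis .
qed

lemma sum_inverse_square_outside_le:
  fixes T :: "int set" and E M :: real
  assumes "finite T" and "1 < M" and T: "\<forall>k\<in>T. M < \<bar>real_of_int k - E\<bar>"
  shows "(\<Sum>k\<in>T. 1 / (real_of_int k - E)\<^sup>2) \<le> 2 / (M - 1)"
proof -
  define Tr where "Tr = {k\<in>T. M < real_of_int k - E}"
  define Tl where "Tl = {k\<in>T. M < E - real_of_int k}"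
  have "M < real_of_int k - E \<or> M < E - real_of_int k" if "k \<in> T" for k
    using T that by (auto simp: abs_real_def split: if_splits)
  then have "T = Tr \<union> Tl" and "Tr \<inter> Tl = {}"
    using \<open>1 < M\<close> by (auto simp: Tr_def Tl_def)
  moreover have "finite Tr" "finite Tl"
    using \<open>finite T\<close> by (simp_all add: Tr_def Tl_def)
  ultimately have "(\<Sum>k\<in>T. 1 / (real_of_int k - E)\<^sup>2)
      = (\<Sum>k\<in>Tr. 1 / (real_of_int k - E)\<^sup>2) + (\<Sum>k\<in>Tl. 1 / (real_of_int k - E)\<^sup>2)"
    by (simp add: sum.union_disjoint)
  also have "(\<Sum>k\<in>Tl. 1 / (real_of_int k - E)\<^sup>2) = (\<Sum>k\<in>uminus ` Tl. 1 / (real_of_int k - (- E))\<^sup>2)"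
    by (simp add: sum.reindex power2_commute)
  also have "\<dots> \<le> 1 / (M - 1)"
    using \<open>finite Tl\<close> \<open>1 < M\<close> by (intro sum_inverse_square_right_tail_le) (auto simp: Tl_def)
  also have "(\<Sum>k\<in>Tr. 1 / (real_of_int k - E)\<^sup>2) \<le> 1 / (M - 1)"
    using \<open>finite Tr\<close> \<open>1 < M\<close> by (intro sum_inverse_square_right_tail_le) (auto simp: Tr_def)
  finally show ?thesis by simp
qed

section \<open>Amplitudes of B-spline boosted phase estimation\<close>

lemma bspline_amp_sq:
  "(bspline_amp m E k)\<^sup>2 = ((sinc ((real_of_int k - E) * pi / real m))\<^sup>2) ^ m"
  unfolding bspline_amp_def by (metis power_mult mult.commute)

lemma bspline_amp_sq_le:
  assumes "1 \<le> m" and far: "real m < \<bar>real_of_int k - E\<bar>"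
  shows "(bspline_amp m E k)\<^sup>2 \<le> (real m)\<^sup>2 / (pi ^ (2 * m) * (real_of_int k - E)\<^sup>2)"
proof -
  define d where "d = real_of_int k - E"
  define x where "x = d * pi / real m"
  define t where "t = (real m)\<^sup>2 / d\<^sup>2"
  have "d \<noteq> 0" "x \<noteq> 0"
    using far \<open>1 \<le> m\<close> by (auto simp: d_def x_def)
  have "(real m)\<^sup>2 < \<bar>d\<bar>\<^sup>2"
    using far by (intro power_strict_mono) (auto simp: d_def)
  then have t: "0 \<le> t" "t \<le> 1"
    by (simp_all add: t_def divide_le_eq_1)
  have "(sinc x)\<^sup>2 \<le> (1 / \<bar>x\<bar>)\<^sup>2"
    using abs_sinc_le_inverse_abs[OF \<open>x \<noteq> 0\<close>] by (metis abs_ge_zero power2_abs power_mono)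
  also have "\<dots> = t / pi\<^sup>2"
    using \<open>1 \<le> m\<close> by (simp add: x_def t_def power_divide power_mult_distrib)
  finally have sinc_sq: "(sinc x)\<^sup>2 \<le> t / pi\<^sup>2" .
  have "(bspline_amp m E k)\<^sup>2 = ((sinc x)\<^sup>2) ^ m"
    by (simp add: bspline_amp_sq x_def d_def)
  also have "\<dots> \<le> (t / pi\<^sup>2) ^ m"
    using sinc_sq by (intro power_mono) auto
  also have "\<dots> = t ^ m / pi ^ (2 * m)"
    by (simp add: power_divide power_mult)
  also have "\<dots> \<le> t / pi ^ (2 * m)"
    using t \<open>1 \<le> m\<close> by (intro divide_right_mono power_decreasing[of 1, simplified]) auto
  finally show ?thesis
    by (simp add: t_def d_def mult.commute)
qed

lemma bspline_amp_sq_ge: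
  assumes near: "\<bar>real_of_int k - E\<bar> * pi \<le> real m"
  shows "(1 / 4) ^ m \<le> (bspline_amp m E k)\<^sup>2"
proof -
  define y where "y = (real_of_int k - E) * pi / real m"
  have "\<bar>y\<bar> \<le> 1"
    using near by (cases "m = 0") (auto simp: y_def abs_mult divide_le_eq_1)
  then have "y\<^sup>2 \<le> 1"
    by (simp add: abs_le_square_iff[of y 1, simplified])
  then have "1 / 2 \<le> sinc y"
    using abs_sinc_minus_one_le[of y] by linarith
  then have "1 / 4 \<le> (sinc y)\<^sup>2"
    using power_mono[of "1/2" "sinc y" 2] by (simp add: power2_eq_square)
  then have "(1 / 4) ^ m \<le> ((sinc y)\<^sup>2) ^ m"
    by (intro power_mono) auto
  then show ?thesis
    by (simp add: bspline_amp_sq y_def)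
qed

lemma finite_qpe_grid [simp]: "finite (qpe_grid l)"
  by (simp add: qpe_grid_def)

lemma qpe_grid_nearest:
  fixes E :: real
  assumes "- (2 ^ (l - 1)) + 1 \<le> E" and "E \<le> 2 ^ (l - 1)"
  shows "\<exists>k\<in>qpe_grid l. \<bar>real_of_int k - E\<bar> \<le> 1 / 2"
proof
  define k where "k = \<lfloor>E + 1 / 2\<rfloor>"
  have k: "real_of_int k \<le> E + 1 / 2" "E - 1 / 2 < real_of_int k"
    unfolding k_def by linarith+
  then show "\<bar>real_of_int k - E\<bar> \<le> 1 / 2"
    by linarith
  have "real_of_int (- (2 ^ (l - 1))) < real_of_int k" "real_of_int k < real_of_int (2 ^ (l - 1) + 1)"
    using k assms by simp_all
  then show "k \<in> qpe_grid l"
    unfolding qpe_grid_def of_int_less_iff by simp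
qed

lemma sum_bspline_amp_sq_ge:
  fixes E :: real
  assumes "2 \<le> m" and "- (2 ^ (l - 1)) + 1 \<le> E" and "E \<le> 2 ^ (l - 1)"
  shows "(1 / 4) ^ m \<le> (\<Sum>j\<in>qpe_grid l. (bspline_amp m E j)\<^sup>2)"
proof -
  obtain k where k: "k \<in> qpe_grid l" "\<bar>real_of_int k - E\<bar> \<le> 1 / 2"
    using qpe_grid_nearest assms(2,3) by blast
  have "\<bar>real_of_int k - E\<bar> * pi \<le> 1 / 2 * 4"
    using k(2) pi_less_4 by (intro mult_mono) auto
  also have "\<dots> \<le> real m"
    using \<open>2 \<le> m\<close> by simp
  finally have "(1 / 4) ^ m \<le> (bspline_amp m E k)\<^sup>2"
    by (rule bspline_amp_sq_ge)
  also have "\<dots> \<le> (\<Sum>j\<in>qpe_grid l. (bspline_amp m E j)\<^sup>2)"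
    using k(1) by (intro member_le_sum) auto
  finally show ?thesis .
qed

lemma bspline_tail_mass_le:
  assumes "2 \<le> m" and "finite T"
  shows "(\<Sum>k\<in>{k\<in>T. real m < \<bar>real_of_int k - E\<bar>}. (bspline_amp m E k)\<^sup>2)
    \<le> 4 * real m / pi ^ (2 * m)"
proof -
  let ?T = "{k\<in>T. real m < \<bar>real_of_int k - E\<bar>}"
  have "(\<Sum>k\<in>?T. (bspline_amp m E k)\<^sup>2)
      \<le> (\<Sum>k\<in>?T. (real m)\<^sup>2 / (pi ^ (2 * m) * (real_of_int k - E)\<^sup>2))"
    using \<open>2 \<le> m\<close> by (intro sum_mono bspline_amp_sq_le) auto
  also have "\<dots> = (real m)\<^sup>2 / pi ^ (2 * m) * (\<Sum>k\<in>?T. 1 / (real_of_int k - E)\<^sup>2)"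
    by (simp add: sum_distrib_left)
  also have "\<dots> \<le> (real m)\<^sup>2 / pi ^ (2 * m) * (2 / (real m - 1))"
    using \<open>2 \<le> m\<close> \<open>finite T\<close>
    by (intro mult_left_mono sum_inverse_square_outside_le) auto
  also have "\<dots> \<le> 4 * real m / pi ^ (2 * m)"
    using \<open>2 \<le> m\<close> by (simp add: field_simps power2_eq_square)
  finally show ?thesis .
qed

lemma bspline_fail_prob_le:
  fixes E \<epsilon> :: real
  assumes "2 \<le> m" and "- (2 ^ (l - 1)) + 1 \<le> E" and "E \<le> 2 ^ (l - 1)"
    and width: "2 * real m \<le> \<epsilon> * 2 ^ l"
  shows "bspline_fail_prob l m E \<epsilon> \<le> 4 * real m * (4 / pi\<^sup>2) ^ m"
proof -
  define D where "D = (\<Sum>j\<in>qpe_grid l. (bspline_amp m E j)\<^sup>2)"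
  have D: "(1 / 4) ^ m \<le> D"
    unfolding D_def using assms(1-3) by (rule sum_bspline_amp_sq_ge)
  then have "0 < D"
    by (rule less_le_trans[rotated]) simp
  have "{k\<in>qpe_grid l. \<bar>real_of_int k - E\<bar> / 2 ^ l > \<epsilon> / 2}
      \<subseteq> {k\<in>qpe_grid l. real m < \<bar>real_of_int k - E\<bar>}"
    using width by (auto simp: field_simps)
  then have "bspline_fail_prob l m E \<epsilon>
      \<le> (\<Sum>k\<in>{k\<in>qpe_grid l. real m < \<bar>real_of_int k - E\<bar>}. (bspline_amp m E k)\<^sup>2) / D"
    unfolding bspline_fail_prob_def bspline_prob_def D_def[symmetric] sum_divide_distrib[symmetric]
    using \<open>0 < D\<close> by (intro divide_right_mono sum_mono2) auto
  also have "\<dots> \<le> (4 * real m / pi ^ (2 * m)) / (1 / 4) ^ m"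
    using \<open>0 < D\<close> D \<open>2 \<le> m\<close>
    by (intro frac_le bspline_tail_mass_le) auto
  also have "\<dots> = 4 * real m * (4 / pi\<^sup>2) ^ m"
    by (simp add: power_divide power_mult power_one_over)
  finally show ?thesis .
qed

lemma bspline_fail_bound_le_exp: "4 * real m * (4 / pi\<^sup>2) ^ m \<le> 16 * exp (- real m / 4)"
proof -
  have "3 * 3 < pi * pi"
    using pi_gt3 by (intro mult_strict_mono) auto
  then have "4 / pi\<^sup>2 \<le> 1 / 2"
    by (simp add: field_simps power2_eq_square)
  then have "(4 / pi\<^sup>2) ^ m \<le> (1 / 2) ^ m"
    by (intro power_mono) auto
  also have "\<dots> \<le> exp (- real m / 2)"
    by (rule half_pow_le_exp)
  finally have pow: "(4 / pi\<^sup>2) ^ m \<le> exp (- real m / 2)" .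
  have lin: "4 * real m \<le> 16 * exp (real m / 4)"
    using exp_ge_add_one_self[of "real m / 4"] by linarith
  have "4 * real m * (4 / pi\<^sup>2) ^ m \<le> 16 * exp (real m / 4) * exp (- real m / 2)"
    using lin pow by (rule mult_mono) auto
  also have "\<dots> = 16 * exp (- real m / 4)"
    by (simp flip: exp_add)
  finally show ?thesis .
qed

lemma bspline_fail_prob_le_delta:
  fixes \<delta> \<epsilon> E :: real
  assumes "0 < \<delta>" and "\<delta> \<le> 1" and order: "16 * (1 + ln (1 / \<delta>)) \<le> real m"
    and "- (2 ^ (l - 1)) + 1 \<le> E" and "E \<le> 2 ^ (l - 1)"
    and "2 * real m \<le> \<epsilon> * 2 ^ l"
  shows "bspline_fail_prob l m E \<epsilon> \<le> \<delta>"
proof -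
  have L: "0 \<le> ln (1 / \<delta>)"
    using \<open>0 < \<delta>\<close> \<open>\<delta> \<le> 1\<close> by simp
  then have "16 \<le> real m"
    using order by (simp add: algebra_simps)
  then have "2 \<le> m"
    by simp
  then have "bspline_fail_prob l m E \<epsilon> \<le> 4 * real m * (4 / pi\<^sup>2) ^ m"
    using assms(4-6) by (rule bspline_fail_prob_le)
  also have "\<dots> \<le> 16 * exp (- real m / 4)"
    by (rule bspline_fail_bound_le_exp)
  also have "\<dots> \<le> 16 * (exp (- 4) * exp (- ln (1 / \<delta>)))"
    unfolding exp_add[symmetric] using order L by simp
  also have "\<dots> = 16 * exp (- 4) * \<delta>"
    using \<open>0 < \<delta>\<close> by (simp add: ln_div)
  also have "\<dots> \<le> \<delta>"
  proof -
    have "(2 :: real) ^ 4 \<le> exp 1 ^ 4"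
      using exp_ge_add_one_self[of 1] by (intro power_mono) auto
    then have "16 \<le> exp (4 :: real)"
      by (simp flip: exp_of_nat_mult)
    then show ?thesis
      using \<open>0 < \<delta>\<close> by (simp add: exp_minus field_simps)
  qed
  finally show ?thesis .
qed

section \<open>Choice of the B-spline order and the number of ancillas\<close>

definition bspline_order :: "real \<Rightarrow> nat" where
  "bspline_order \<delta> = nat \<lceil>16 * (1 + ln (1 / \<delta>))\<rceil>"

lemma bspline_order_bounds:
  assumes "0 < \<delta>" and "\<delta> \<le> 1"
  shows "16 \<le> bspline_order \<delta>"
    and "16 * (1 + ln (1 / \<delta>)) \<le> real (bspline_order \<delta>)"
    and "real (bspline_order \<delta>) \<le> 17 * (1 + ln (1 / \<delta>))"
proof -
  define x where "x = 16 * (1 + ln (1 / \<delta>))"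
  have "16 \<le> x"
    using assms by (simp add: x_def)
  then have "real (bspline_order \<delta>) = of_int \<lceil>x\<rceil>"
    unfolding bspline_order_def x_def[symmetric] by (intro of_nat_nat) simp
  then have "x \<le> real (bspline_order \<delta>)" "real (bspline_order \<delta>) \<le> x + 1"
    by simp_all
  moreover have "17 * (1 + ln (1 / \<delta>)) = 17 / 16 * x"
    by (simp add: x_def)
  ultimately show "16 \<le> bspline_order \<delta>"
    and "16 * (1 + ln (1 / \<delta>)) \<le> real (bspline_order \<delta>)"
    and "real (bspline_order \<delta>) \<le> 17 * (1 + ln (1 / \<delta>))"
    using \<open>16 \<le> x\<close> unfolding x_def[symmetric] by linarith+
qed

definition ancilla_threshold :: "nat \<Rightarrow> real \<Rightarrow> nat" where
  "ancilla_threshold m \<epsilon> = nat \<lceil>log 2 (2 * real m / \<epsilon>)\<rceil>"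

lemma ancilla_threshold_width:
  assumes "0 < \<epsilon>" and "1 \<le> m" and "ancilla_threshold m \<epsilon> \<le> l"
  shows "2 * real m \<le> \<epsilon> * 2 ^ l"
proof -
  have X: "0 < 2 * real m / \<epsilon>"
    using assms by simp
  have "2 * real m / \<epsilon> = 2 powr log 2 (2 * real m / \<epsilon>)"
    using X by simp
  also have "\<dots> \<le> 2 powr real (ancilla_threshold m \<epsilon>)"
    unfolding ancilla_threshold_def by (intro powr_mono real_nat_ceiling_ge) auto
  also have "\<dots> \<le> 2 powr real l"
    using assms(3) by (intro powr_mono) auto
  also have "\<dots> = 2 ^ l"
    by (simp add: powr_realpow)
  finally show ?thesis
    using \<open>0 < \<epsilon>\<close> by (simp add: field_simps)
qed

lemma ancilla_threshold_le:
  assumes "0 < \<epsilon>" and "\<epsilon> \<le> 1" and "1 \<le> m" and "1 \<le> c" and "real m \<le> 32 * c"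
  shows "real (ancilla_threshold m \<epsilon>) \<le> 7 * (1 + ln (1 / \<epsilon>) + ln c)"
proof -
  have "1 \<le> c / \<epsilon>" and logs: "0 \<le> ln (1 / \<epsilon>)" "0 \<le> ln c"
    using assms by (simp_all add: field_simps)
  have "1 \<le> log 2 (2 * real m / \<epsilon>)"
    using assms by (simp add: le_log_iff field_simps)
  then have "real (ancilla_threshold m \<epsilon>) = of_int \<lceil>log 2 (2 * real m / \<epsilon>)\<rceil>"
    unfolding ancilla_threshold_def by (intro of_nat_nat) simp
  also have "\<dots> \<le> log 2 (2 * real m / \<epsilon>) + 1"
    by simp
  also have "\<dots> \<le> log 2 (2 ^ 6 * (c / \<epsilon>)) + 1"
    using assms by (intro add_right_mono log_mono) (auto simp: field_simps)
  also have "\<dots> = 7 + log 2 (c / \<epsilon>)"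
    using assms log_pow_cancel[of 2 6] by (subst log_mult_pos) auto
  also have "\<dots> \<le> 7 + 2 * ln (c / \<epsilon>)"
    using \<open>1 \<le> c / \<epsilon>\<close> log2_le_two_ln by simp
  also have "\<dots> = 7 + 2 * ln (1 / \<epsilon>) + 2 * ln c"
    using assms by (simp add: ln_div)
  also have "\<dots> \<le> 7 * (1 + ln (1 / \<epsilon>) + ln c)"
    using logs by simp
  finally show ?thesis .
qed

theorem theorem1:
  shows "\<exists>C1 C2 :: real. C1 > 0 \<and> C2 > 0 \<and>
    (\<forall>\<delta> :: real. 0 < \<delta> \<and> \<delta> < 1 \<longrightarrow>
      (\<exists>m :: nat. 1 \<le> m \<and> real m \<le> C1 * (1 + ln (1 / \<delta>)) \<and>
        (\<forall>\<epsilon> :: real. 0 < \<epsilon> \<and> \<epsilon> < 1 \<longrightarrow>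
          (\<exists>L0 :: nat. real L0 \<le> C2 * (1 + ln (1 / \<epsilon>) + ln (1 + ln (1 / \<delta>))) \<and>
            (\<forall>l :: nat. L0 \<le> l \<longrightarrow> 1 \<le> l \<longrightarrow>
              (\<forall>E :: real. - (2 ^ (l - 1)) + 1 \<le> E \<and> E \<le> 2 ^ (l - 1) \<longrightarrow>
                 bspline_fail_prob l m E \<epsilon> \<le> \<delta>))))))"
proof (rule exI[of _ 17], rule exI[of _ 7], intro conjI allI impI)
  fix \<delta> :: real
  assume "0 < \<delta> \<and> \<delta> < 1"
  then have \<delta>: "0 < \<delta>" "\<delta> < 1" and "0 \<le> ln (1 / \<delta>)"
    by auto
  define m where "m = bspline_order \<delta>"
  have m: "1 \<le> m" "real m \<le> 17 * (1 + ln (1 / \<delta>))" "16 * (1 + ln (1 / \<delta>)) \<le> real m"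
    using bspline_order_bounds[of \<delta>] \<delta> by (auto simp: m_def)
  have ancillas: "real (ancilla_threshold m \<epsilon>) \<le> 7 * (1 + ln (1 / \<epsilon>) + ln (1 + ln (1 / \<delta>)))"
    if "0 < \<epsilon> \<and> \<epsilon> < 1" for \<epsilon> :: real
    using that m \<open>0 \<le> ln (1 / \<delta>)\<close> by (intro ancilla_threshold_le) auto
  have fail: "bspline_fail_prob l m E \<epsilon> \<le> \<delta>"
    if "0 < \<epsilon> \<and> \<epsilon> < 1" "ancilla_threshold m \<epsilon> \<le> l"
      "- (2 ^ (l - 1)) + 1 \<le> E \<and> E \<le> 2 ^ (l - 1)" for \<epsilon> E :: real and l
    using that m \<delta> by (intro bspline_fail_prob_le_delta ancilla_threshold_width) auto
  show "\<exists>m. 1 \<le> m \<and> real m \<le> 17 * (1 + ln (1 / \<delta>)) \<and>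
      (\<forall>\<epsilon>. 0 < \<epsilon> \<and> \<epsilon> < 1 \<longrightarrow>
        (\<exists>L0. real L0 \<le> 7 * (1 + ln (1 / \<epsilon>) + ln (1 + ln (1 / \<delta>))) \<and>
          (\<forall>l. L0 \<le> l \<longrightarrow> 1 \<le> l \<longrightarrow>
            (\<forall>E. - (2 ^ (l - 1)) + 1 \<le> E \<and> E \<le> 2 ^ (l - 1) \<longrightarrow>
              bspline_fail_prob l m E \<epsilon> \<le> \<delta>))))"
    using m(1,2) ancillas fail by blast
qed simp_all

end
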